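(* Let $P=(U,R)$ be a partial order with $U=\{u_1,\dots,u_n\}$, let $V=\{v_1,\dots,v_n\}$, and let $E_0=\{u_iv_i: 1\le i\le n\}$. The following are equivalent: (a) $P=P_1\cap P_2$ for some linear order $P_1$ and some interval order $P_2$ on $U$; (b) there exist two partial orders $P_1,P_2$ on $U$ such that $\widehat{C}(P)=\widehat{NC}(P_1)\cup\widehat{C}(P_2)$ and both $\widehat{NC}(P_1)$ and $\widehat{C}(P_2)$ are chain graphs; (c) $\widehat{C}(P)$ is linear-interval coverable, i.e. $\widehat{C}(P)=G_1\cup G_2$ for two chain graphs $G_1=(U,V,E_1)$ and $G_2=(U,V,E_2)$ with $E_0\subseteq E_2\setminus E_1$.
   Context: For a partial order $Q$ on $U=\{u_1,\dots,u_n\}$ and a disjoint copy $V=\{v_1,\dots,v_n\}$: the domination bipartite graph $C(Q)=(U,V,E)$ has $u_iv_j\in E$ iff $u_i<_Q u_j$; the bipartite graph $NC(Q)=(U,V,E')$ has $u_iv_j\in E'$ iff $u_i\le_Q u_j$ (i.e. $u_i<_Q u_j$ or $i=j$). For a bipartite graph $B=(U,V,F)$, its bipartite complement is $\widehat{B}=(U,V,\widehat F)$ where, for $u\in U,v\in V$, $uv\in\widehat F$ iff $uv\notin F$. For graphs on the same vertex set, $G_1\cup G_2$ denotes the graph with the union of the edge sets. A bipartite graph $(U,V,F)$ is a chain graph if for any two vertices in the same color class one neighborhood contains the other. A linear order is a partial order in which any two distinct elements are comparable; an interval order is a partial order whose elements can be assigned real intervals $I_x$ so that $x<y$ iff $I_x$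 lies entirely to the left of $I_y$; $P_1\cap P_2$ is the order whose relation is the intersection of the relations. *)

theory Defs
  imports Complex_Main
begin

text \<open>A bipartite graph (U,V,F) with V a disjoint copy of U is encoded by the set of
pairs (x,y) in U x U, where (x,y) stands for the edge u_x v_y.\<close>

definition partial_order_on_set :: "'a set \<Rightarrow> 'a rel \<Rightarrow> bool" where
  "partial_order_on_set U R \<longleftrightarrow> R \<subseteq> U \<times> U \<and> irrefl_on U R \<and> trans R"

definition linear_order_on_set :: "'a set \<Rightarrow> 'a rel \<Rightarrow> bool" where
  "linear_order_on_set U R \<longleftrightarrow> partial_order_on_set U R \<and> total_on U R"

definition interval_order_on_set :: "'a set \<Rightarrow> 'a rel \<Rightarrow> bool" where
  "interval_order_on_set U R \<longleftrightarrow> partial_order_on_set U R \<and>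
     (\<exists>l r :: 'a \<Rightarrow> real. (\<forall>x\<in>U. l x \<le> r x) \<and>
        (\<forall>x\<in>U. \<forall>y\<in>U. (x, y) \<in> R \<longleftrightarrow> r x < l y))"

definition C_graph :: "'a set \<Rightarrow> 'a rel \<Rightarrow> 'a rel" where
  "C_graph U Q = {(x, y). x \<in> U \<and> y \<in> U \<and> (x, y) \<in> Q}"

definition NC_graph :: "'a set \<Rightarrow> 'a rel \<Rightarrow> 'a rel" where
  "NC_graph U Q = {(x, y). x \<in> U \<and> y \<in> U \<and> ((x, y) \<in> Q \<or> x = y)}"

definition bip_compl :: "'a set \<Rightarrow> 'a rel \<Rightarrow> 'a rel" where
  "bip_compl U F = (U \<times> U) - F"

definition chain_graph :: "'a set \<Rightarrow> 'a rel \<Rightarrow> bool" where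
  "chain_graph U F \<longleftrightarrow> F \<subseteq> U \<times> U \<and>
     (\<forall>x\<in>U. \<forall>x'\<in>U. {y. (x, y) \<in> F} \<subseteq> {y. (x', y) \<in> F} \<or> {y. (x', y) \<in> F} \<subseteq> {y. (x, y) \<in> F}) \<and>
     (\<forall>y\<in>U. \<forall>y'\<in>U. {x. (x, y) \<in> F} \<subseteq> {x. (x, y') \<in> F} \<or> {x. (x, y') \<in> F} \<subseteq> {x. (x, y) \<in> F})"

end

theory Submission
  imports Defs "HOL-Library.Product_Lexorder"
begin

text \<open>Chain graphs are exactly the Ferrers relations (no edges xy, x'y' with both cross pairs
xy', x'y missing), interval orders are exactly the Ferrers partial orders, and the bipartite
complement of a Ferrers relation is Ferrers. For (c) \<Longrightarrow> (a), the complement of E2 is then an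
interval order, as E2 contains the diagonal. The linear order ranks x first by the size of the
E1-neighbourhood of its down-set, then by the size of its down-set: the first rank never
decreases along P and strictly decreases along E1, because E1 is Ferrers and avoids P and the
diagonal.\<close>

definition ferrers :: "'a rel \<Rightarrow> bool" where
  "ferrers F \<longleftrightarrow> (\<forall>x y x' y'. (x, y) \<in> F \<longrightarrow> (x', y') \<in> F \<longrightarrow> (x, y') \<in> F \<or> (x', y) \<in> F)"

lemma ferrersD: "\<lbrakk>ferrers F; (x, y) \<in> F; (x', y') \<in> F\<rbrakk> \<Longrightarrow> (x, y') \<in> F \<or> (x', y) \<in> F"
  unfolding ferrers_def by blast

lemma bip_compl_C_graph: "R \<subseteq> U \<times> U \<Longrightarrow> bip_compl U (C_graph U R) = U \<times> U - R"
  unfolding bip_compl_def C_graph_def by auto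

lemma bip_compl_NC_graph: "bip_compl U (NC_graph U R) = U \<times> U - R - Id"
  unfolding bip_compl_def NC_graph_def by auto

lemma chain_graph_iff_ferrers: "chain_graph U F \<longleftrightarrow> F \<subseteq> U \<times> U \<and> ferrers F"
  unfolding chain_graph_def ferrers_def by blast

lemma ferrers_Diff: "ferrers F \<Longrightarrow> ferrers (A \<times> B - F)"
  unfolding ferrers_def by blast

lemma ferrers_converse_linear_order:
  assumes "linear_order_on_set U L"
  shows "ferrers (U \<times> U - L - Id)"
  using assms
  unfolding ferrers_def linear_order_on_set_def partial_order_on_set_def total_on_def
    irrefl_on_def trans_def
  by blast

lemma ferrers_interval_order:
  assumes "interval_order_on_set U I"
  shows "ferrers I"
proof -
  obtain l r :: "'a \<Rightarrow> real" where sub: "I \<subseteq> U \<times> U"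
    and lr: "\<forall>x\<in>U. \<forall>y\<in>U. (x, y) \<in> I \<longleftrightarrow> r x < l y"
    using assms by (auto simp: interval_order_on_set_def partial_order_on_set_def)
  show ?thesis
    unfolding ferrers_def
  proof (intro allI impI)
    fix x y x' y' assume "(x, y) \<in> I" "(x', y') \<in> I"
    with sub lr have "r x < l y" "r x' < l y'" and U: "x \<in> U" "y \<in> U" "x' \<in> U" "y' \<in> U"
      by blast+
    then have "r x < l y' \<or> r x' < l y" by linarith
    then show "(x, y') \<in> I \<or> (x', y) \<in> I" using lr U by blast
  qed
qed

text \<open>Left endpoints count predecessors; the right endpoint of x is the largest left endpoint
of an element not above x.\<close>

lemma interval_order_if_ferrers:
  assumes fin: "finite U" and po: "partial_order_on_set U R" and fer: "ferrers R"
  shows "interval_order_on_set U R"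
proof -
  have sub: "R \<subseteq> U \<times> U" and irr: "\<forall>x\<in>U. (x, x) \<notin> R"
    using po by (auto simp: partial_order_on_set_def irrefl_on_def)
  define l where "l y = real (card {x. (x, y) \<in> R})" for y
  define S where "S x = {z \<in> U. (x, z) \<notin> R}" for x
  define r where "r x = Max (l ` S x)" for x
  have finS: "finite (l ` S x)" for x using fin by (auto simp: S_def)
  have self: "x \<in> U \<Longrightarrow> x \<in> S x" for x using irr by (auto simp: S_def)
  have le_r: "z \<in> S x \<Longrightarrow> l z \<le> r x" for x z
    unfolding r_def using finS by (auto intro!: Max_ge)
  have r_less: "r x < l y" if "x \<in> U" "(x, y) \<in> R" for x y
  proof -
    have "l z < l y" if "z \<in> S x" for z
    proof -
      have "(x, z) \<notin> R" using that by (simp add: S_def)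
      then have "(w, y) \<in> R" if "(w, z) \<in> R" for w
        using ferrersD[OF fer that \<open>(x, y) \<in> R\<close>] by blast
      then have "{w. (w, z) \<in> R} \<subset> {w. (w, y) \<in> R}"
        using \<open>(x, z) \<notin> R\<close> \<open>(x, y) \<in> R\<close> by blast
      moreover have "finite {w. (w, y) \<in> R}"
        by (rule finite_subset[OF _ fin]) (use sub in blast)
      ultimately show ?thesis unfolding l_def by (simp add: psubset_card_mono)
    qed
    then show ?thesis
      using finS self[OF \<open>x \<in> U\<close>] unfolding r_def by (subst Max_less_iff) auto
  qed
  have "(x, y) \<in> R \<longleftrightarrow> r x < l y" if "x \<in> U" "y \<in> U" for x y
  proof
    show "r x < l y" if "(x, y) \<in> R" using r_less \<open>x \<in> U\<close> that .
  next
    assume "r x < l y"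
    moreover have "(x, y) \<notin> R \<Longrightarrow> l y \<le> r x" using le_r \<open>y \<in> U\<close> by (simp add: S_def)
    ultimately show "(x, y) \<in> R" by linarith
  qed
  moreover have "l x \<le> r x" if "x \<in> U" for x using le_r self that .
  ultimately show ?thesis
    unfolding interval_order_on_set_def using po by blast
qed

lemma interval_order_iff_ferrers:
  "finite U \<Longrightarrow> interval_order_on_set U R \<longleftrightarrow> partial_order_on_set U R \<and> ferrers R"
  by (metis interval_order_if_ferrers ferrers_interval_order interval_order_on_set_def)

lemma partial_order_compl_ferrers:
  assumes "ferrers E" and "Id_on U \<subseteq> E"
  shows "partial_order_on_set U (U \<times> U - E)"
  using assms
  unfolding partial_order_on_set_def ferrers_def irrefl_on_def trans_def Id_on_def
  by blast

lemma linear_order_refining_rank: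
  fixes f :: "'a \<Rightarrow> 'b::linorder"
  assumes "finite U"
  obtains L where "linear_order_on_set U L"
    and "\<And>x y. x \<in> U \<Longrightarrow> y \<in> U \<Longrightarrow> f x < f y \<Longrightarrow> (x, y) \<in> L"
    and "\<And>x y. (x, y) \<in> L \<Longrightarrow> f x \<le> f y"
proof -
  obtain k :: "'a \<Rightarrow> nat" where "inj_on k U"
    using finite_imp_inj_to_nat_seg[OF assms] by blast
  then have key_inj: "\<lbrakk>x \<in> U; y \<in> U; (f x, k x) = (f y, k y)\<rbrakk> \<Longrightarrow> x = y" for x y
    by (auto dest: inj_onD)
  define L where "L = {(x, y). x \<in> U \<and> y \<in> U \<and> (f x, k x) < (f y, k y)}"
  have "linear_order_on_set U L"
    unfolding linear_order_on_set_def partial_order_on_set_def L_def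
    by (auto simp: irrefl_on_def trans_def total_on_def dest: key_inj)
  moreover have "(x, y) \<in> L" if "x \<in> U" "y \<in> U" "f x < f y" for x y
    using that by (simp add: L_def less_prod_def)
  moreover have "f x \<le> f y" if "(x, y) \<in> L" for x y
    using that by (auto simp: L_def less_prod_def)
  ultimately show ?thesis using that by blast
qed

lemma linear_extension_avoiding_ferrers:
  assumes fin: "finite U" and po: "partial_order_on_set U P"
    and sub: "E \<subseteq> U \<times> U" and fer: "ferrers E"
    and disj: "E \<inter> (P \<union> Id) = {}"
  obtains L where "linear_order_on_set U L" and "P \<subseteq> L" and "L \<inter> E = {}"
proof -
  have subP: "P \<subseteq> U \<times> U" and irr: "irrefl_on U P" and tr: "trans P"
    using po by (auto simp: partial_order_on_set_def)
  define down where "down x = {w. (w, x) \<in> P}" for x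
  define N where "N x = E `` insert x (down x)" for x
  define rank where "rank x = (card (N x), card (down x))" for x
  have fin_N: "finite (N x)" for x
    by (rule finite_subset[OF _ fin]) (use sub in \<open>auto simp: N_def\<close>)
  have fin_down: "finite (down x)" for x
    by (rule finite_subset[OF _ fin]) (use subP in \<open>auto simp: down_def\<close>)
  have E_rank: "rank y < rank x" if "(x, y) \<in> E" for x y
  proof -
    have "N y \<subseteq> N x"
      using that fer disj unfolding N_def down_def ferrers_def by blast
    moreover have "y \<in> N x - N y"
      using that disj unfolding N_def down_def by blast
    ultimately have "card (N y) < card (N x)"
      using fin_N by (metis Diff_iff psubsetI psubset_card_mono)
    then show ?thesis by (simp add: rank_def)
  qed
  have P_rank: "rank x < rank y" if "(x, y) \<in> P" for x y
  proof -
    have "insert x (down x) \<subseteq> insert y (down y)" and down_less: "down x \<subset> down y"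
      using that tr irr subP unfolding down_def trans_def irrefl_on_def by blast+
    then have "N x \<subseteq> N y" unfolding N_def by blast
    then have "card (N x) \<le> card (N y)" using fin_N by (rule card_mono[rotated])
    moreover have "card (down x) < card (down y)" using fin_down down_less by (rule psubset_card_mono)
    ultimately show ?thesis by (simp add: rank_def less_prod_def)
  qed
  obtain L where lin: "linear_order_on_set U L"
    and L_intro: "\<And>x y. x \<in> U \<Longrightarrow> y \<in> U \<Longrightarrow> rank x < rank y \<Longrightarrow> (x, y) \<in> L"
    and L_rank: "\<And>x y. (x, y) \<in> L \<Longrightarrow> rank x \<le> rank y"
    using linear_order_refining_rank[OF fin] by blast
  show ?thesis
  proof (rule that[OF lin])
    show "P \<subseteq> L" using subP P_rank L_intro by auto
    show "L \<inter> E = {}" using E_rank L_rank by (fastforce dest: leD)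
  qed
qed

lemma linear_interval_imp_chain_cover:
  assumes "linear_order_on_set U P1" "interval_order_on_set U P2" "P = P1 \<inter> P2"
  shows "partial_order_on_set U P1 \<and> partial_order_on_set U P2 \<and>
    bip_compl U (C_graph U P) = bip_compl U (NC_graph U P1) \<union> bip_compl U (C_graph U P2) \<and>
    chain_graph U (bip_compl U (NC_graph U P1)) \<and> chain_graph U (bip_compl U (C_graph U P2))"
proof -
  have po1: "partial_order_on_set U P1" and po2: "partial_order_on_set U P2"
    using assms(1,2) by (auto simp: linear_order_on_set_def interval_order_on_set_def)
  then have sub: "P \<subseteq> U \<times> U" "P2 \<subseteq> U \<times> U" and irr2: "irrefl_on U P2"
    using assms(3) unfolding partial_order_on_set_def by blast+
  have "U \<times> U - P = (U \<times> U - P1 - Id) \<union> (U \<times> U - P2)"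
    using assms(3) irr2 by (auto simp: irrefl_on_def)
  moreover have "ferrers (U \<times> U - P2)"
    using ferrers_Diff ferrers_interval_order[OF assms(2)] by blast
  ultimately show ?thesis
    unfolding bip_compl_NC_graph bip_compl_C_graph[OF sub(1)] bip_compl_C_graph[OF sub(2)]
      chain_graph_iff_ferrers
    using po1 po2 ferrers_converse_linear_order[OF assms(1)] by blast
qed

lemma chain_cover_imp_linear_interval:
  assumes fin: "finite U" and po: "partial_order_on_set U P"
    and c1: "chain_graph U E1" and c2: "chain_graph U E2"
    and cover: "bip_compl U (C_graph U P) = E1 \<union> E2" and diag: "Id_on U \<subseteq> E2 - E1"
  shows "\<exists>P1 P2. linear_order_on_set U P1 \<and> interval_order_on_set U P2 \<and> P = P1 \<inter> P2"
proof -
  have subP: "P \<subseteq> U \<times> U" using po by (simp add: partial_order_on_set_def)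
  then have compl: "U \<times> U - P = E1 \<union> E2" using cover by (simp add: bip_compl_C_graph)
  have sub1: "E1 \<subseteq> U \<times> U" and fer1: "ferrers E1" and fer2: "ferrers E2"
    using c1 c2 by (auto simp: chain_graph_iff_ferrers)
  have "interval_order_on_set U (U \<times> U - E2)"
    using fin partial_order_compl_ferrers[OF fer2] diag ferrers_Diff[OF fer2]
    by (auto simp: interval_order_iff_ferrers)
  moreover obtain P1 where "linear_order_on_set U P1" "P \<subseteq> P1" "P1 \<inter> E1 = {}"
  proof (rule linear_extension_avoiding_ferrers[OF fin po sub1 fer1])
    show "E1 \<inter> (P \<union> Id) = {}" using compl diag sub1 by blast
  qed
  moreover have "P1 \<inter> (U \<times> U - E2) \<subseteq> P" using \<open>P1 \<inter> E1 = {}\<close> compl by blast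
  ultimately show ?thesis using subP compl by blast
qed

theorem theorem5:
  fixes U :: "'a set" and P :: "'a rel"
  assumes "finite U" and "partial_order_on_set U P"
  shows "((\<exists>P1 P2. linear_order_on_set U P1 \<and> interval_order_on_set U P2 \<and> P = P1 \<inter> P2)
          \<longleftrightarrow>
          (\<exists>P1 P2. partial_order_on_set U P1 \<and> partial_order_on_set U P2 \<and>
             bip_compl U (C_graph U P) = bip_compl U (NC_graph U P1) \<union> bip_compl U (C_graph U P2) \<and>
             chain_graph U (bip_compl U (NC_graph U P1)) \<and> chain_graph U (bip_compl U (C_graph U P2))))
       \<and>
         ((\<exists>P1 P2. partial_order_on_set U P1 \<and> partial_order_on_set U P2 \<and>
             bip_compl U (C_graph U P) = bip_compl U (NC_graph U P1) \<union> bip_compl U (C_graph U P2) \<and>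
             chain_graph U (bip_compl U (NC_graph U P1)) \<and> chain_graph U (bip_compl U (C_graph U P2)))
          \<longleftrightarrow>
          (\<exists>E1 E2. chain_graph U E1 \<and> chain_graph U E2 \<and>
             bip_compl U (C_graph U P) = E1 \<union> E2 \<and> Id_on U \<subseteq> E2 - E1))"
    (is "(?A \<longleftrightarrow> ?B) \<and> (_ \<longleftrightarrow> ?C)")
proof -
  have diag: "Id_on U \<subseteq> bip_compl U (C_graph U P2) - bip_compl U (NC_graph U P1)"
    if "partial_order_on_set U P2" for P1 P2
    using that by (auto simp: bip_compl_def C_graph_def NC_graph_def
        partial_order_on_set_def irrefl_on_def)
  have "?A \<Longrightarrow> ?B" using linear_interval_imp_chain_cover by blast
  moreover have "?B \<Longrightarrow> ?C" using diag by blast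
  moreover have "?C \<Longrightarrow> ?A" using chain_cover_imp_linear_interval[OF assms] by blast
  ultimately show ?thesis by blast
qed

end
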